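(* Let $T$ be a tree and let $D\subseteq L(T)$ be a set of legs of $T$ with an even number of elements. Then there exists a unique cycle $C$ in $T$ whose set of legs is $D$.
   Context: A graph $T$ is a finite set $X(T)$ with idempotent root map $r$ and involution $\iota$ fixing $r(X(T))$ pointwise; vertices are $r(X(T))$, half-edges the rest, edges the size-2 $\iota$-orbits of half-edges, legs the $\iota$-fixed half-edges. A tree is a connected weighted graph of genus $0$ (so $\#E-\#V+1=0$ and all vertex weights are $0$). A subgraph is a subset of $X(T)$ preserved by $r$ and $\iota$, with weights restricted. For a subgraph $C$ and $v\in V(C)$, $\mathrm{val}_C(v)$ is the number of half-edges of $C$ rooted at $v$. A cycle in $T$ is a subgraph $C$ such that every vertex $v$ of $C$ satisfies $2-2g(v)-\mathrm{val}_C(v)\leq0$ and $\mathrm{val}_C(v)$ is even. The legs of $C$ are the legs of $T$ lying in $C$. *)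

theory Defs
  imports Main
begin

definition is_graph :: "'a set \<Rightarrow> ('a \<Rightarrow> 'a) \<Rightarrow> ('a \<Rightarrow> 'a) \<Rightarrow> bool" where
  "is_graph X r i \<longleftrightarrow> finite X \<and> r ` X \<subseteq> X \<and> i ` X \<subseteq> X
     \<and> (\<forall>x\<in>X. r (r x) = r x) \<and> (\<forall>x\<in>X. i (i x) = x) \<and> (\<forall>x\<in>X. i (r x) = r x)"

definition vertices :: "'a set \<Rightarrow> ('a \<Rightarrow> 'a) \<Rightarrow> 'a set" where
  "vertices X r = r ` X"

definition half_edges :: "'a set \<Rightarrow> ('a \<Rightarrow> 'a) \<Rightarrow> 'a set" where
  "half_edges X r = X - r ` X"

definition graph_edges :: "'a set \<Rightarrow> ('a \<Rightarrow> 'a) \<Rightarrow> ('a \<Rightarrow> 'a) \<Rightarrow> 'a set set" where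
  "graph_edges X r i = {{h, i h} | h. h \<in> half_edges X r \<and> i h \<noteq> h}"

definition graph_legs :: "'a set \<Rightarrow> ('a \<Rightarrow> 'a) \<Rightarrow> ('a \<Rightarrow> 'a) \<Rightarrow> 'a set" where
  "graph_legs X r i = {h \<in> half_edges X r. i h = h}"

definition adjacency :: "'a set \<Rightarrow> ('a \<Rightarrow> 'a) \<Rightarrow> ('a \<Rightarrow> 'a) \<Rightarrow> ('a \<times> 'a) set" where
  "adjacency X r i = {(r h, r (i h)) | h. h \<in> half_edges X r \<and> i h \<noteq> h}"

definition graph_connected :: "'a set \<Rightarrow> ('a \<Rightarrow> 'a) \<Rightarrow> ('a \<Rightarrow> 'a) \<Rightarrow> bool" where
  "graph_connected X r i \<longleftrightarrow> vertices X r \<noteq> {} \<and>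
     (\<forall>v\<in>vertices X r. \<forall>w\<in>vertices X r. (v, w) \<in> (adjacency X r i)\<^sup>*)"

text \<open>A tree: connected weighted graph of genus 0, i.e. #E - #V + 1 = 0 and all weights 0.\<close>
definition is_tree :: "'a set \<Rightarrow> ('a \<Rightarrow> 'a) \<Rightarrow> ('a \<Rightarrow> 'a) \<Rightarrow> ('a \<Rightarrow> nat) \<Rightarrow> bool" where
  "is_tree X r i g \<longleftrightarrow> is_graph X r i \<and> graph_connected X r i
     \<and> int (card (graph_edges X r i)) - int (card (vertices X r)) + 1 = 0
     \<and> (\<forall>v\<in>vertices X r. g v = 0)"

definition is_subgraph :: "'a set \<Rightarrow> ('a \<Rightarrow> 'a) \<Rightarrow> ('a \<Rightarrow> 'a) \<Rightarrow> 'a set \<Rightarrow> bool" where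
  "is_subgraph X r i C \<longleftrightarrow> C \<subseteq> X \<and> r ` C \<subseteq> C \<and> i ` C \<subseteq> C"

definition val :: "'a set \<Rightarrow> ('a \<Rightarrow> 'a) \<Rightarrow> 'a \<Rightarrow> nat" where
  "val C r v = card {h \<in> half_edges C r. r h = v}"

definition is_cycle :: "'a set \<Rightarrow> ('a \<Rightarrow> 'a) \<Rightarrow> ('a \<Rightarrow> 'a) \<Rightarrow> ('a \<Rightarrow> nat) \<Rightarrow> 'a set \<Rightarrow> bool" where
  "is_cycle X r i g C \<longleftrightarrow> is_subgraph X r i C \<and>
     (\<forall>v\<in>vertices C r. 2 - 2 * int (g v) - int (val C r v) \<le> 0 \<and> even (val C r v))"

definition cycle_legs :: "'a set \<Rightarrow> ('a \<Rightarrow> 'a) \<Rightarrow> ('a \<Rightarrow> 'a) \<Rightarrow> 'a set \<Rightarrow> 'a set" where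
  "cycle_legs X r i C = graph_legs X r i \<inter> C"

end

(*
  With all weights zero, a cycle C is the same thing as its set H = C - r ` C of half-edges:
  H is closed under the involution and meets every vertex an even number of times, C is H
  together with the roots of H, and the legs of C are the legs in H.  Such even sets are closed
  under symmetric difference.

  Existence: for a leg a, the half-edges of a path from the root of a to a fixed base vertex,
  together with a, form a set whose only odd vertex is the base vertex.  Taking the symmetric
  difference of these sets over the legs in D gives a set with legs D which is odd at most at
  the base vertex, hence even everywhere since |D| is even.

  Uniqueness: the symmetric difference of two solutions is a legless even set, and in a tree
  such a set is empty.  Measure depth as graph distance from a base vertex.  Every non-root
  vertex descends to the root along some edge; since #E = #V - 1 these descending edges exhaust
  all edges, so every edge descends from exactly one endpoint and every vertex descends along
  at most one edge.  At a vertex of maximal depth, every half-edge of the set descends, so there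
  is exactly one of them, which contradicts evenness.
*)
theory Submission
  imports Defs
begin

lemma card_sym_diff_add:
  assumes "finite A" "finite B"
  shows "card (sym_diff A B) + 2 * card (A \<inter> B) = card A + card B"
proof -
  have "A \<union> B = sym_diff A B \<union> (A \<inter> B)" "sym_diff A B \<inter> (A \<inter> B) = {}"
    by blast+
  then have "card (A \<union> B) = card (sym_diff A B) + card (A \<inter> B)"
    using assms by (simp add: card_Un_disjoint)
  then show ?thesis
    using card_Un_Int[OF assms] by simp
qed

definition degree :: "('a \<Rightarrow> 'a) \<Rightarrow> 'a set \<Rightarrow> 'a \<Rightarrow> nat" where
  "degree r H v = card {h \<in> H. r h = v}"

lemma odd_degree_sym_diff:
  assumes "finite A" "finite B"
  shows "odd (degree r (sym_diff A B) v) \<longleftrightarrow> odd (degree r A v) \<noteq> odd (degree r B v)"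
proof -
  let ?A = "{h \<in> A. r h = v}" and ?B = "{h \<in> B. r h = v}"
  have "{h \<in> sym_diff A B. r h = v} = sym_diff ?A ?B"
    by blast
  moreover have "card (sym_diff ?A ?B) + 2 * card (?A \<inter> ?B) = card ?A + card ?B"
    using assms by (intro card_sym_diff_add) auto
  ultimately show ?thesis
    unfolding degree_def by presburger
qed

lemma odd_degree_singleton: "odd (degree r {a} v) \<longleftrightarrow> v = r a"
  unfolding degree_def by (cases "r a = v") (simp_all add: Collect_conv_if)

lemma odd_degree_doubleton:
  assumes "a \<noteq> b"
  shows "odd (degree r {a, b} v) \<longleftrightarrow> (v = r a) \<noteq> (v = r b)"
proof -
  have "{h \<in> {a, b}. r h = v} = (if r a = v then {a} else {}) \<union> (if r b = v then {b} else {})"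
    by auto
  then show ?thesis
    using assms unfolding degree_def by auto
qed

definition rel_dist :: "('a \<times> 'a) set \<Rightarrow> 'a \<Rightarrow> 'a \<Rightarrow> nat" where
  "rel_dist A x y = (LEAST n. (x, y) \<in> A ^^ n)"

lemma rel_dist_last_step:
  assumes "(x, y) \<in> A\<^sup>*" "y \<noteq> x"
  obtains z where "(z, y) \<in> A" "rel_dist A x y = Suc (rel_dist A x z)"
proof -
  obtain n where "(x, y) \<in> A ^^ n"
    using assms(1) rtrancl_power by blast
  then have xy: "(x, y) \<in> A ^^ rel_dist A x y"
    unfolding rel_dist_def by (rule LeastI)
  then obtain m where m: "rel_dist A x y = Suc m"
    using assms(2) by (cases "rel_dist A x y") auto
  with xy obtain z where xz: "(x, z) \<in> A ^^ m" and zy: "(z, y) \<in> A"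
    by (auto elim: relpow_Suc_E)
  have "rel_dist A x z \<le> m"
    unfolding rel_dist_def using xz by (rule Least_le)
  moreover have "(x, z) \<in> A ^^ rel_dist A x z"
    unfolding rel_dist_def using xz by (rule LeastI)
  then have "rel_dist A x y \<le> Suc (rel_dist A x z)"
    unfolding rel_dist_def using zy by (intro Least_le relpow_Suc_I)
  ultimately show ?thesis
    using that zy m by simp
qed

locale half_edge_graph =
  fixes X :: "'a set" and r i :: "'a \<Rightarrow> 'a"
  assumes is_graph: "is_graph X r i"
begin

lemma finite_X: "finite X"
  and root_in_X: "x \<in> X \<Longrightarrow> r x \<in> X"
  and inv_in_X: "x \<in> X \<Longrightarrow> i x \<in> X"
  and root_root: "x \<in> X \<Longrightarrow> r (r x) = r x"
  and inv_inv: "x \<in> X \<Longrightarrow> i (i x) = x"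
  and inv_root: "x \<in> X \<Longrightarrow> i (r x) = r x"
  using is_graph unfolding is_graph_def by auto

lemma half_edges_subset: "half_edges X r \<subseteq> X"
  unfolding half_edges_def by blast

lemma inv_half_edge:
  assumes "h \<in> half_edges X r"
  shows "i h \<in> half_edges X r"
proof -
  have h: "h \<in> X" "h \<notin> r ` X"
    using assms unfolding half_edges_def by auto
  have "i h \<notin> r ` X"
  proof
    assume "i h \<in> r ` X"
    then obtain x where "x \<in> X" "i h = r x"
      by blast
    then have "h = r x"
      using inv_inv[OF h(1)] inv_root by metis
    with h \<open>x \<in> X\<close> show False
      by blast
  qed
  then show ?thesis
    using h inv_in_X unfolding half_edges_def by blast
qed

lemma legs_subset_half_edges: "graph_legs X r i \<subseteq> half_edges X r"
  unfolding graph_legs_def by blast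

lemma legs_disjoint_roots: "graph_legs X r i \<inter> r ` X = {}"
  unfolding graph_legs_def half_edges_def by blast

lemma finite_edges: "finite (graph_edges X r i)"
proof -
  have "graph_edges X r i \<subseteq> Pow X"
    unfolding graph_edges_def using half_edges_subset inv_in_X by auto
  then show ?thesis
    using finite_X by (meson finite_Pow_iff finite_subset)
qed

definition is_edge_set :: "'a set \<Rightarrow> bool" where
  "is_edge_set H \<longleftrightarrow> H \<subseteq> half_edges X r \<and> i ` H \<subseteq> H"

definition cycle_space :: "'a set set" where
  "cycle_space = {H. is_edge_set H \<and> (\<forall>v. even (degree r H v))}"

lemma is_edge_set_finite: "is_edge_set H \<Longrightarrow> finite H"
  unfolding is_edge_set_def using finite_X half_edges_subset by (meson finite_subset subset_trans)

lemma is_edge_set_sym_diff: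
  assumes "is_edge_set A" "is_edge_set B"
  shows "is_edge_set (sym_diff A B)"
proof -
  have "i h \<in> sym_diff A B" if "h \<in> sym_diff A B" for h
  proof -
    have "h \<in> X"
      using that assms half_edges_subset unfolding is_edge_set_def by blast
    then show ?thesis
      using that assms inv_inv unfolding is_edge_set_def by (auto simp: image_subset_iff)
  qed
  then show ?thesis
    using assms unfolding is_edge_set_def by blast
qed

lemma cycle_space_sym_diff:
  assumes "A \<in> cycle_space" "B \<in> cycle_space"
  shows "sym_diff A B \<in> cycle_space"
proof -
  have "finite A" "finite B"
    using assms is_edge_set_finite unfolding cycle_space_def by auto
  then show ?thesis
    using assms is_edge_set_sym_diff odd_degree_sym_diff[of A B r] unfolding cycle_space_def by auto
qed

lemma path_edge_set:
  assumes "(v, w) \<in> (adjacency X r i)\<^sup>*"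
  obtains S where "is_edge_set S" "S \<inter> graph_legs X r i = {}"
    "\<And>x. odd (degree r S x) \<longleftrightarrow> (x = v) \<noteq> (x = w)"
proof -
  have "\<exists>S. is_edge_set S \<and> S \<inter> graph_legs X r i = {} \<and>
      (\<forall>x. odd (degree r S x) \<longleftrightarrow> (x = v) \<noteq> (x = w))"
    using assms
  proof (induction rule: rtrancl_induct)
    case base
    show ?case
      by (rule exI[of _ "{}"]) (simp add: is_edge_set_def degree_def)
  next
    case (step w z)
    then obtain S where S: "is_edge_set S" "S \<inter> graph_legs X r i = {}"
      "\<And>x. odd (degree r S x) \<longleftrightarrow> (x = v) \<noteq> (x = w)"
      by blast
    from step.hyps(2) obtain h where h: "h \<in> half_edges X r" "i h \<noteq> h" "w = r h" "z = r (i h)"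
      unfolding adjacency_def by blast
    have ii_h: "i (i h) = h"
      using h(1) half_edges_subset inv_inv by blast
    have edge: "is_edge_set {h, i h}"
      using h(1) ii_h inv_half_edge unfolding is_edge_set_def by auto
    have edge_legs: "{h, i h} \<inter> graph_legs X r i = {}"
      using h(2) ii_h unfolding graph_legs_def by auto
    have edge_degree: "odd (degree r {h, i h} x) \<longleftrightarrow> (x = w) \<noteq> (x = z)" for x
      using odd_degree_doubleton[of h "i h"] h by auto
    show ?case
    proof (intro exI conjI allI)
      show "is_edge_set (sym_diff S {h, i h})"
        using S(1) edge by (rule is_edge_set_sym_diff)
      show "sym_diff S {h, i h} \<inter> graph_legs X r i = {}"
        using S(2) edge_legs by blast
      show "odd (degree r (sym_diff S {h, i h}) x) \<longleftrightarrow> (x = v) \<noteq> (x = z)" for x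
        unfolding odd_degree_sym_diff[OF is_edge_set_finite is_edge_set_finite, OF S(1) edge]
          S(3) edge_degree
        by auto
    qed
  qed
  then obtain S where "is_edge_set S" "S \<inter> graph_legs X r i = {}"
    "\<forall>x. odd (degree r S x) \<longleftrightarrow> (x = v) \<noteq> (x = w)"
    by blast
  then show ?thesis
    using that by presburger
qed

lemma edge_set_with_legs:
  assumes "graph_connected X r i" "\<rho> \<in> vertices X r"
    and "finite D" "D \<subseteq> graph_legs X r i"
  obtains H where "is_edge_set H" "H \<inter> graph_legs X r i = D"
    "\<And>x. odd (degree r H x) \<longleftrightarrow> x = \<rho> \<and> odd (card D)"
proof -
  have "\<exists>H. is_edge_set H \<and> H \<inter> graph_legs X r i = D \<and>
      (\<forall>x. odd (degree r H x) \<longleftrightarrow> x = \<rho> \<and> odd (card D))"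
    using assms(3,4)
  proof (induction rule: finite_induct)
    case empty
    show ?case
      by (rule exI[of _ "{}"]) (simp add: is_edge_set_def degree_def)
  next
    case (insert a D)
    then obtain H where H: "is_edge_set H" "H \<inter> graph_legs X r i = D"
      "\<And>x. odd (degree r H x) \<longleftrightarrow> x = \<rho> \<and> odd (card D)"
      by blast
    have a: "a \<in> graph_legs X r i"
      using insert.prems by blast
    then have "a \<in> X" "i a = a"
      using legs_subset_half_edges half_edges_subset unfolding graph_legs_def by auto
    then have "(r a, \<rho>) \<in> (adjacency X r i)\<^sup>*"
      using assms(1,2) unfolding graph_connected_def vertices_def by blast
    then obtain S where S: "is_edge_set S" "S \<inter> graph_legs X r i = {}"
      "\<And>x. odd (degree r S x) \<longleftrightarrow> (x = r a) \<noteq> (x = \<rho>)"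
      by (rule path_edge_set) blast
    have leg: "is_edge_set {a}"
      using a \<open>i a = a\<close> legs_subset_half_edges unfolding is_edge_set_def by auto
    have HS: "is_edge_set (sym_diff H S)"
      using H(1) S(1) by (rule is_edge_set_sym_diff)
    have "odd (degree r (sym_diff (sym_diff H S) {a}) x) \<longleftrightarrow> x = \<rho> \<and> odd (card (insert a D))" for x
      unfolding odd_degree_sym_diff[OF is_edge_set_finite is_edge_set_finite, OF HS leg]
        odd_degree_sym_diff[OF is_edge_set_finite is_edge_set_finite, OF H(1) S(1)]
        H(3) S(3) odd_degree_singleton card_insert_disjoint[OF insert.hyps]
      by auto
    moreover have "sym_diff (sym_diff H S) {a} \<inter> graph_legs X r i = insert a D"
      using H(2) S(2) a insert.hyps(2) by blast
    ultimately show ?case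
      using is_edge_set_sym_diff[OF HS leg] by blast
  qed
  then obtain H where "is_edge_set H" "H \<inter> graph_legs X r i = D"
    "\<forall>x. odd (degree r H x) \<longleftrightarrow> x = \<rho> \<and> odd (card D)"
    by blast
  then show ?thesis
    using that by presburger
qed

lemma cycle_space_with_legs:
  assumes "graph_connected X r i" "D \<subseteq> graph_legs X r i" "even (card D)"
  obtains H where "H \<in> cycle_space" "H \<inter> graph_legs X r i = D"
proof -
  obtain \<rho> where "\<rho> \<in> vertices X r"
    using assms(1) unfolding graph_connected_def by blast
  moreover have "finite D"
    using assms(2) legs_subset_half_edges half_edges_subset finite_X by (meson finite_subset subset_trans)
  ultimately obtain H where "is_edge_set H" "H \<inter> graph_legs X r i = D"
    "\<And>x. odd (degree r H x) \<longleftrightarrow> x = \<rho> \<and> odd (card D)"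
    using edge_set_with_legs[OF assms(1) _ _ assms(2)] by blast
  with assms(3) that show ?thesis
    unfolding cycle_space_def by blast
qed

lemma half_edges_of_subgraph:
  assumes "is_subgraph X r i C"
  shows "is_edge_set (half_edges C r)"
proof -
  have C: "C \<subseteq> X" "r ` C \<subseteq> C" "i ` C \<subseteq> C"
    using assms unfolding is_subgraph_def by auto
  have "h \<in> half_edges X r" if "h \<in> half_edges C r" for h
  proof -
    have h: "h \<in> C" "h \<notin> r ` C"
      using that unfolding half_edges_def by auto
    have "h \<notin> r ` X"
      using h C(1) root_root by (metis image_eqI image_iff subsetD)
    then show ?thesis
      using h C(1) unfolding half_edges_def by blast
  qed
  moreover have "i h \<in> half_edges C r" if "h \<in> half_edges C r" for h
  proof -
    have h: "h \<in> C" "h \<notin> r ` C"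
      using that unfolding half_edges_def by auto
    have "i h \<notin> r ` C"
    proof
      assume "i h \<in> r ` C"
      then obtain c where "c \<in> C" "i h = r c"
        by blast
      then have "h = r c"
        using h(1) C(1) inv_inv inv_root by (metis subsetD)
      with h \<open>c \<in> C\<close> show False
        by blast
    qed
    then show ?thesis
      using h C(3) unfolding half_edges_def by blast
  qed
  ultimately show ?thesis
    unfolding is_edge_set_def by blast
qed

lemma cycle_legs_eq_half_edges_legs:
  assumes "is_subgraph X r i C"
  shows "cycle_legs X r i C = half_edges C r \<inter> graph_legs X r i"
  using assms legs_disjoint_roots unfolding cycle_legs_def half_edges_def is_subgraph_def by blast

lemma degree_half_edges: "degree r (half_edges C r) v = val C r v"
  unfolding degree_def val_def ..

lemma half_edges_in_cycle_space:
  assumes "is_cycle X r i g C"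
  shows "half_edges C r \<in> cycle_space"
proof -
  have "even (degree r (half_edges C r) v)" for v
  proof (cases "v \<in> vertices C r")
    case True
    then show ?thesis
      using assms unfolding is_cycle_def degree_half_edges by blast
  next
    case False
    then have "{h \<in> half_edges C r. r h = v} = {}"
      unfolding half_edges_def vertices_def by blast
    then show ?thesis
      unfolding degree_def by (metis card.empty even_zero)
  qed
  moreover have "is_edge_set (half_edges C r)"
    using assms half_edges_of_subgraph unfolding is_cycle_def by blast
  ultimately show ?thesis
    unfolding cycle_space_def by blast
qed

text \<open>This is the only place where the weights matter: weight zero forces valence at least 2,
  so no vertex of a cycle is isolated.\<close>
lemma cycle_eq_half_edges_roots:
  assumes "is_cycle X r i g C" "\<forall>v\<in>vertices X r. g v = 0"
  shows "C = half_edges C r \<union> r ` half_edges C r"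
proof -
  have C: "C \<subseteq> X" "r ` C \<subseteq> C"
    using assms(1) unfolding is_cycle_def is_subgraph_def by auto
  have "v \<in> r ` half_edges C r" if v: "v \<in> r ` C" for v
  proof -
    have "g v = 0"
      using assms(2) v C(1) unfolding vertices_def by auto
    then have "val C r v \<noteq> 0"
      using assms(1) v unfolding is_cycle_def vertices_def by fastforce
    then have "{h \<in> half_edges C r. r h = v} \<noteq> {}"
      unfolding val_def by (metis card.empty)
    then show ?thesis
      by blast
  qed
  moreover have "r ` half_edges C r \<subseteq> C"
    using C(2) unfolding half_edges_def by blast
  ultimately show ?thesis
    unfolding half_edges_def by blast
qed

lemma half_edges_Un_roots:
  assumes "is_edge_set H"
  shows "half_edges (H \<union> r ` H) r = H"
proof -
  have H: "H \<subseteq> X" "H \<inter> r ` X = {}"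
    using assms half_edges_subset unfolding is_edge_set_def half_edges_def by auto
  then have "r ` (H \<union> r ` H) = r ` H"
    using root_root by (auto simp: image_iff)
  then show ?thesis
    using H unfolding half_edges_def by blast
qed

lemma cycle_of_cycle_space:
  assumes "H \<in> cycle_space"
  shows "is_cycle X r i g (H \<union> r ` H)"
proof -
  have H: "is_edge_set H" "\<And>v. even (degree r H v)"
    using assms unfolding cycle_space_def by auto
  then have HX: "H \<subseteq> X" "i ` H \<subseteq> H"
    using half_edges_subset unfolding is_edge_set_def by auto
  have roots: "r ` (H \<union> r ` H) = r ` H"
    using HX(1) root_root by (auto simp: image_iff)
  have "is_subgraph X r i (H \<union> r ` H)"
    using HX root_in_X inv_root roots unfolding is_subgraph_def by (auto simp: image_subset_iff)
  moreover have "2 - 2 * int (g v) - int (val (H \<union> r ` H) r v) \<le> 0 \<and> even (val (H \<union> r ` H) r v)"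
    if v: "v \<in> vertices (H \<union> r ` H) r" for v
  proof -
    have val: "val (H \<union> r ` H) r v = degree r H v"
      unfolding degree_half_edges[symmetric] half_edges_Un_roots[OF H(1)] ..
    obtain h where "h \<in> H" "r h = v"
      using v roots unfolding vertices_def by auto
    then have "degree r H v \<noteq> 0"
      using is_edge_set_finite[OF H(1)] unfolding degree_def by auto
    then have "degree r H v \<ge> 2"
      using H(2)[of v] by (cases "degree r H v" rule: parity_cases) auto
    then show ?thesis
      using H(2) val by simp
  qed
  ultimately show ?thesis
    unfolding is_cycle_def by blast
qed

definition descending :: "'a \<Rightarrow> 'a \<Rightarrow> bool" where
  "descending \<rho> h \<longleftrightarrow> h \<in> half_edges X r \<and> i h \<noteq> h \<and>
     Suc (rel_dist (adjacency X r i) \<rho> (r (i h))) = rel_dist (adjacency X r i) \<rho> (r h)"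

lemma descending_exists:
  assumes "(\<rho>, v) \<in> (adjacency X r i)\<^sup>*" "v \<noteq> \<rho>"
  obtains h where "descending \<rho> h" "r h = v"
proof -
  obtain u where "(u, v) \<in> adjacency X r i"
    and dist: "rel_dist (adjacency X r i) \<rho> v = Suc (rel_dist (adjacency X r i) \<rho> u)"
    using assms by (rule rel_dist_last_step)
  then obtain k where k: "k \<in> half_edges X r" "i k \<noteq> k" "u = r k" "v = r (i k)"
    unfolding adjacency_def by blast
  then have "i (i k) = k"
    using half_edges_subset inv_inv by blast
  then have "descending \<rho> (i k)"
    using k dist inv_half_edge unfolding descending_def by auto
  with that k(4) show ?thesis
    by blast
qed

lemma descending_edge_eq:
  assumes "descending \<rho> h" "descending \<rho> k" "{h, i h} = {k, i k}"
  shows "h = k"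
proof (rule ccontr)
  assume "h \<noteq> k"
  with assms(3) have "i h = k" "i k = h"
    unfolding doubleton_eq_iff by auto
  then have "Suc (rel_dist (adjacency X r i) \<rho> (r k)) = rel_dist (adjacency X r i) \<rho> (r h)"
    "Suc (rel_dist (adjacency X r i) \<rho> (r h)) = rel_dist (adjacency X r i) \<rho> (r k)"
    using assms(1,2) unfolding descending_def by auto
  then show False
    by linarith
qed

end

locale half_edge_tree = half_edge_graph +
  assumes connected: "graph_connected X r i"
    and card_edges: "card (graph_edges X r i) + 1 = card (vertices X r)"
begin

lemma parent_edges:
  assumes "\<rho> \<in> vertices X r"
  obtains f where "\<And>v. v \<in> vertices X r - {\<rho>} \<Longrightarrow> descending \<rho> (f v) \<and> r (f v) = v"
    "(\<lambda>v. {f v, i (f v)}) ` (vertices X r - {\<rho>}) = graph_edges X r i"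
proof -
  have "\<exists>h. descending \<rho> h \<and> r h = v" if v: "v \<in> vertices X r - {\<rho>}" for v
  proof -
    have "(\<rho>, v) \<in> (adjacency X r i)\<^sup>*" "v \<noteq> \<rho>"
      using v assms connected unfolding graph_connected_def by auto
    then obtain h where "descending \<rho> h" "r h = v"
      by (rule descending_exists)
    then show ?thesis
      by blast
  qed
  then obtain f where f: "\<And>v. v \<in> vertices X r - {\<rho>} \<Longrightarrow> descending \<rho> (f v) \<and> r (f v) = v"
    by metis
  let ?e = "\<lambda>v. {f v, i (f v)}"
  have "inj_on ?e (vertices X r - {\<rho>})"
  proof (rule inj_onI)
    fix v w
    assume v: "v \<in> vertices X r - {\<rho>}" and w: "w \<in> vertices X r - {\<rho>}" and "?e v = ?e w"
    then have "f v = f w"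
      using descending_edge_eq f[OF v] f[OF w] by blast
    then show "v = w"
      using f[OF v] f[OF w] by metis
  qed
  then have "card (?e ` (vertices X r - {\<rho>})) = card (graph_edges X r i)"
    using card_edges assms finite_X by (simp add: card_image vertices_def)
  moreover have "?e ` (vertices X r - {\<rho>}) \<subseteq> graph_edges X r i"
    using f unfolding graph_edges_def descending_def by blast
  ultimately have "?e ` (vertices X r - {\<rho>}) = graph_edges X r i"
    using finite_edges by (simp add: card_subset_eq)
  with f that show ?thesis
    by blast
qed

lemma edge_descending:
  assumes "\<rho> \<in> vertices X r" "h \<in> half_edges X r" "i h \<noteq> h"
  shows "descending \<rho> h \<or> descending \<rho> (i h)"
proof -
  obtain f where f: "\<And>v. v \<in> vertices X r - {\<rho>} \<Longrightarrow> descending \<rho> (f v) \<and> r (f v) = v"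
    "(\<lambda>v. {f v, i (f v)}) ` (vertices X r - {\<rho>}) = graph_edges X r i"
    using parent_edges[OF assms(1)] by blast
  have "{h, i h} \<in> graph_edges X r i"
    using assms(2,3) unfolding graph_edges_def by blast
  then obtain v where v: "v \<in> vertices X r - {\<rho>}" "{h, i h} = {f v, i (f v)}"
    using f(2) by blast
  then have "h = f v \<or> i h = f v"
    by (auto simp: doubleton_eq_iff)
  with f(1)[OF v(1)] show ?thesis
    by auto
qed

lemma descending_unique:
  assumes "\<rho> \<in> vertices X r" "descending \<rho> h" "descending \<rho> k" "r h = r k"
  shows "h = k"
proof -
  obtain f where f: "\<And>v. v \<in> vertices X r - {\<rho>} \<Longrightarrow> descending \<rho> (f v) \<and> r (f v) = v"
    "(\<lambda>v. {f v, i (f v)}) ` (vertices X r - {\<rho>}) = graph_edges X r i"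
    using parent_edges[OF assms(1)] by blast
  have parent: "h = f (r h)" if "descending \<rho> h" for h
  proof -
    have "{h, i h} \<in> graph_edges X r i"
      using that unfolding graph_edges_def descending_def by blast
    then obtain v where v: "v \<in> vertices X r - {\<rho>}" "{h, i h} = {f v, i (f v)}"
      using f(2) by blast
    then have "h = f v"
      using descending_edge_eq[OF that] f(1)[OF v(1)] by blast
    then show ?thesis
      using f(1) v(1) by simp
  qed
  show ?thesis
    using parent[OF assms(2)] parent[OF assms(3)] assms(4) by simp
qed

lemma legless_cycle_space_empty:
  assumes "H \<in> cycle_space" "H \<inter> graph_legs X r i = {}"
  shows "H = {}"
proof (rule ccontr)
  assume "H \<noteq> {}"
  obtain \<rho> where \<rho>: "\<rho> \<in> vertices X r"
    using connected unfolding graph_connected_def by blast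
  define depth where "depth h = rel_dist (adjacency X r i) \<rho> (r h)" for h
  have H: "H \<subseteq> half_edges X r" "i ` H \<subseteq> H" "finite H" "\<And>v. even (degree r H v)"
    using assms(1) is_edge_set_finite unfolding cycle_space_def is_edge_set_def by auto
  have "Max (depth ` H) \<in> depth ` H"
    using H(3) \<open>H \<noteq> {}\<close> by (intro Max_in) auto
  then obtain h0 where "h0 \<in> H" "depth h0 = Max (depth ` H)"
    by (metis imageE)
  then have h0: "h0 \<in> H" "\<And>h. h \<in> H \<Longrightarrow> depth h \<le> depth h0"
    using H(3) by auto
  have descends: "descending \<rho> h" if h: "h \<in> H" "r h = r h0" for h
  proof -
    have "i h \<noteq> h"
      using h(1) H(1) assms(2) unfolding graph_legs_def by blast
    have "depth (i h) \<le> depth h"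
      using h0(2)[of "i h"] H(2) h unfolding depth_def by auto
    moreover have "i (i h) = h"
      using h(1) H(1) half_edges_subset inv_inv by blast
    ultimately have "\<not> descending \<rho> (i h)"
      unfolding descending_def depth_def by auto
    then show ?thesis
      using edge_descending[OF \<rho>] h(1) H(1) \<open>i h \<noteq> h\<close> by blast
  qed
  have "{h \<in> H. r h = r h0} = {h0}"
  proof (intro equalityI subsetI)
    fix h
    assume "h \<in> {h \<in> H. r h = r h0}"
    then show "h \<in> {h0}"
      using descending_unique[OF \<rho> descends descends] h0(1) by auto
  qed (use h0(1) in auto)
  then show False
    using H(4)[of "r h0"] unfolding degree_def by simp
qed

lemma cycle_space_eq_if_legs_eq:
  assumes "A \<in> cycle_space" "B \<in> cycle_space"
    and "A \<inter> graph_legs X r i = B \<inter> graph_legs X r i"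
  shows "A = B"
proof -
  have "sym_diff A B \<inter> graph_legs X r i = {}"
    using assms(3) by blast
  with cycle_space_sym_diff[OF assms(1,2)] have "sym_diff A B = {}"
    by (rule legless_cycle_space_empty)
  then show ?thesis
    by blast
qed

end

theorem proposition5p18:
  fixes X :: "'a set" and r i :: "'a \<Rightarrow> 'a" and g :: "'a \<Rightarrow> nat" and D :: "'a set"
  assumes "is_tree X r i g"
    and "D \<subseteq> graph_legs X r i"
    and "even (card D)"
  shows "\<exists>!C. is_cycle X r i g C \<and> cycle_legs X r i C = D"
proof -
  interpret half_edge_tree X r i
    using assms(1) unfolding is_tree_def by unfold_locales auto
  have weights: "\<forall>v\<in>vertices X r. g v = 0"
    using assms(1) unfolding is_tree_def by blast
  obtain H where H: "H \<in> cycle_space" "H \<inter> graph_legs X r i = D"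
    using cycle_space_with_legs[OF connected assms(2,3)] by blast
  have edge_set: "is_edge_set H"
    using H(1) unfolding cycle_space_def by blast
  show ?thesis
  proof (rule ex1I[of _ "H \<union> r ` H"])
    have "is_cycle X r i g (H \<union> r ` H)"
      using H(1) by (rule cycle_of_cycle_space)
    then show "is_cycle X r i g (H \<union> r ` H) \<and> cycle_legs X r i (H \<union> r ` H) = D"
      using cycle_legs_eq_half_edges_legs half_edges_Un_roots[OF edge_set] H(2)
      unfolding is_cycle_def by auto
  next
    fix C
    assume C: "is_cycle X r i g C \<and> cycle_legs X r i C = D"
    then have "half_edges C r \<inter> graph_legs X r i = D"
      using cycle_legs_eq_half_edges_legs unfolding is_cycle_def by auto
    then have "half_edges C r = H"
      using cycle_space_eq_if_legs_eq half_edges_in_cycle_space C H by blast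
    then show "C = H \<union> r ` H"
      using cycle_eq_half_edges_roots C weights by blast
  qed
qed

end
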